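(* Let $n_h\ge1$, $n_o\ge 2$, $n=n_o+n_h-1$, and let $A^{m(n)T}$, $G^{m(n)}$, $B^{m(n)T}$ be the modified Toom-Cook matrices built from $A^{(n-1)T}$, $G^{(n-1)}$, $B^{(n-1)T}$ as in the context. For $h\in F^{n_h}$, $x\in F^n$ let $s^{m(n)}=A^{m(n)T}(G^{m(n)}h\odot B^{m(n)T}x)$ be the exact value, $\hat s^{m(n)}$ the floating point value computed as in the context, and $x^{(n-1)}=(x_1,\dots,x_{n-1})^T$. Then for $q=1,\dots,n_o-1$, $$|\hat s^{m(n)}_q-s^{m(n)}_q|\le |A^{(n-1)T}_{q,:}|\big(|G^{(n-1)}|\,|h|\odot|B^{(n-1)T}|\,|x^{(n-1)}|\big)\big(\gamma^{(n_h)}+\beta^{(n-1)}+\alpha^{(n-1)}+1\big)\varepsilon+O(\varepsilon^2),$$ and for $q=n_o$, $$|\hat s^{m(n)}_{n_o}-s^{m(n)}_{n_o}|\le\Big(|A^{(n-1)T}_{n_o,:}|\big(|G^{(n-1)}|\,|h|\odot|B^{(n-1)T}|\,|x^{(n-1)}|\big)+|h_{n_h}|\,|B^{m(n)T}_{n,:}|\,|x|\Big)\Big(\max\{\gamma^{(n_h)}+\beta^{(n-1)}+\alpha^{(n-1)}+1,\ \beta^{(n)}+1\}+1\Big)\varepsilon+O(\varepsilon^2).$$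
   Context: Let $p_1,\dots,p_{n-1}$ be distinct reals, $N_i=1/\prod_{j\ne i,\,j\le n-1}(p_i-p_j)$, $M_{i,j}$ the coefficient of $a^{j-1}$ in $\prod_{k\ne i,\,k\le n-1}(a-p_k)$, and $M_j$ ($j=1,\dots,n$) the coefficient of $a^{j-1}$ in $\prod_{k=1}^{n-1}(a-p_k)$ (so $M_n=1$). Define $A^{(n-1)T}\in\mathbb{R}^{n_o\times(n-1)}$ by $A^{(n-1)T}_{i,j}=p_j^{i-1}$, $G^{(n-1)}\in\mathbb{R}^{(n-1)\times n_h}$ by $G^{(n-1)}_{i,j}=p_i^{j-1}N_i$, $B^{(n-1)T}\in\mathbb{R}^{(n-1)\times(n-1)}$ by $B^{(n-1)T}_{i,j}=M_{j,i}$. The modified matrices are: $G^{m(n)}\in\mathbb{R}^{n\times n_h}$ equals $G^{(n-1)}$ with an appended last row $(0,\dots,0,1)$; $A^{m(n)T}\in\mathbb{R}^{n_o\times n}$ equals $A^{(n-1)T}$ with an appended last column $(0,\dots,0,1)^T$; $B^{m(n)T}\in\mathbb{R}^{n\times n}$ has upper-left block $B^{(n-1)T}$, last column zero in rows $1,\dots,n-1$, and last row $(M_1,\dots,M_n)$. $M_{q,:}$ denotes row $q$ of a matrix $M$. Floating point model: set $F$, unit roundoff $\varepsilon$, no overflow, $fl(y\,\mathrm{op}\,z)=(y\,\mathrm{op}\,z)(1+\delta)$, $fl(y)=y(1+\delta)$, $|\delta|\le\varepsilon$; matrix entries stored rounded. Computation: $u=fl(fl(G^{(n-1)})h)$, $v=fl(fl(B^{(n-1)T})x^{(n-1)})$,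 $w_i=fl(u_iv_i)$ ($i\le n-1$); for $q<n_o$, $\hat s^{m(n)}_q=fl(fl(A^{(n-1)T}_{q,:})w)$; for $q=n_o$, $\hat s^{m(n)}_{n_o}=fl\big(fl(fl(A^{(n-1)T}_{n_o,:})w)+fl(h_{n_h}\,fl(fl(B^{m(n)T}_{n,:})x))\big)$ (structural zeros and ones are not multiplied). Constants: $\gamma^{(n_h)}$, $\beta^{(n-1)}$, $\alpha^{(n-1)}$, $\beta^{(n)}$ are such that for every row $a^T$ of $G^{(n-1)}$, of $B^{(n-1)T}$, of $A^{(n-1)T}$, and for the row $B^{m(n)T}_{n,:}$ respectively, and every floating point vector $y$ of matching length, $|a^Ty-fl(fl(a^T)y)|\le |a^T||y|\,c\,\varepsilon+O(\varepsilon^2)$ with the respective $c$. $|\cdot|$ is entrywise absolute value, $\odot$ the Hadamard product. *)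

theory Defs
  imports Complex_Main "HOL-Computational_Algebra.Polynomial"
begin

text \<open>All vectors and matrices are 1-indexed functions on nat.
  The parameter m stands for n-1 = n_o + n_h - 2 (the number of interpolation points).\<close>

definition tcN :: "(nat \<Rightarrow> real) \<Rightarrow> nat \<Rightarrow> nat \<Rightarrow> real" where
  "tcN p m i = 1 / (\<Prod>j\<in>{1..m} - {i}. (p i - p j))"

definition tcMi :: "(nat \<Rightarrow> real) \<Rightarrow> nat \<Rightarrow> nat \<Rightarrow> nat \<Rightarrow> real" where
  "tcMi p m i j = coeff (\<Prod>k\<in>{1..m} - {i}. [:- p k, 1:]) (j - 1)"

definition tcM :: "(nat \<Rightarrow> real) \<Rightarrow> nat \<Rightarrow> nat \<Rightarrow> real" where
  "tcM p m j = coeff (\<Prod>k\<in>{1..m}. [:- p k, 1:]) (j - 1)"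

definition tcAT :: "(nat \<Rightarrow> real) \<Rightarrow> nat \<Rightarrow> nat \<Rightarrow> real" where
  "tcAT p i j = p j ^ (i - 1)"

definition tcG :: "(nat \<Rightarrow> real) \<Rightarrow> nat \<Rightarrow> nat \<Rightarrow> nat \<Rightarrow> real" where
  "tcG p m i j = p i ^ (j - 1) * tcN p m i"

definition tcBT :: "(nat \<Rightarrow> real) \<Rightarrow> nat \<Rightarrow> nat \<Rightarrow> nat \<Rightarrow> real" where
  "tcBT p m i j = tcMi p m j i"

definition tcGm :: "(nat \<Rightarrow> real) \<Rightarrow> nat \<Rightarrow> nat \<Rightarrow> nat \<Rightarrow> nat \<Rightarrow> real" where
  "tcGm p m nh i j = (if i = m + 1 then (if j = nh then 1 else 0) else tcG p m i j)"

definition tcATm :: "(nat \<Rightarrow> real) \<Rightarrow> nat \<Rightarrow> nat \<Rightarrow> nat \<Rightarrow> nat \<Rightarrow> real" where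
  "tcATm p m no i j = (if j = m + 1 then (if i = no then 1 else 0) else tcAT p i j)"

definition tcBTm :: "(nat \<Rightarrow> real) \<Rightarrow> nat \<Rightarrow> nat \<Rightarrow> nat \<Rightarrow> real" where
  "tcBTm p m i j = (if i = m + 1 then tcM p m j else if j = m + 1 then 0 else tcBT p m i j)"

definition exact_s :: "(nat \<Rightarrow> real) \<Rightarrow> nat \<Rightarrow> nat \<Rightarrow> (nat \<Rightarrow> real) \<Rightarrow> (nat \<Rightarrow> real) \<Rightarrow> nat \<Rightarrow> real" where
  "exact_s p nh no h x q =
     (let n = no + nh - 1; m = n - 1 in
      \<Sum>j=1..n. tcATm p m no q j *
        ((\<Sum>k=1..nh. tcGm p m nh j k * h k) * (\<Sum>k=1..n. tcBTm p m j k * x k)))"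

definition fp_model :: "real set \<Rightarrow> real \<Rightarrow> (real \<Rightarrow> real \<Rightarrow> real) \<Rightarrow> (real \<Rightarrow> real \<Rightarrow> real) \<Rightarrow> bool" where
  "fp_model F eps fmul fadd \<longleftrightarrow> 0 < eps \<and>
     (\<forall>y\<in>F. \<forall>z\<in>F. fmul y z \<in> F \<and> (\<exists>d. \<bar>d\<bar> \<le> eps \<and> fmul y z = (y * z) * (1 + d))) \<and>
     (\<forall>y\<in>F. \<forall>z\<in>F. fadd y z \<in> F \<and> (\<exists>d. \<bar>d\<bar> \<le> eps \<and> fadd y z = (y + z) * (1 + d)))"

text \<open>fdot a len y is the floating point value fl(fl(a^T) y) of the dot product of the
  (exact) row a (entries a 1..a len, stored rounded) with the floating point vector y.
  dot_err states the defining property of the constants gamma, beta, alpha: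
  |a^T y - fl(fl(a^T) y)| <= |a^T| |y| c eps + O(eps^2), the O(eps^2) term read
  as |a^T| |y| K0 eps^2 with K0 independent of eps and y.\<close>
definition dot_err :: "real set \<Rightarrow> real \<Rightarrow> ((nat \<Rightarrow> real) \<Rightarrow> nat \<Rightarrow> (nat \<Rightarrow> real) \<Rightarrow> real)
     \<Rightarrow> (nat \<Rightarrow> real) \<Rightarrow> nat \<Rightarrow> real \<Rightarrow> real \<Rightarrow> bool" where
  "dot_err F eps fdot a len c K0 \<longleftrightarrow>
     (\<forall>y. (\<forall>j\<in>{1..len}. y j \<in> F) \<longrightarrow>
        fdot a len y \<in> F \<and>
        \<bar>(\<Sum>j=1..len. a j * y j) - fdot a len y\<bar>
          \<le> (\<Sum>j=1..len. \<bar>a j\<bar> * \<bar>y j\<bar>) * (c * eps + K0 * eps\<^sup>2))"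

definition shat :: "(real \<Rightarrow> real \<Rightarrow> real) \<Rightarrow> (real \<Rightarrow> real \<Rightarrow> real)
     \<Rightarrow> ((nat \<Rightarrow> real) \<Rightarrow> nat \<Rightarrow> (nat \<Rightarrow> real) \<Rightarrow> real)
     \<Rightarrow> (nat \<Rightarrow> real) \<Rightarrow> nat \<Rightarrow> nat \<Rightarrow> (nat \<Rightarrow> real) \<Rightarrow> (nat \<Rightarrow> real) \<Rightarrow> nat \<Rightarrow> real" where
  "shat fmul fadd fdot p nh no h x q =
     (let n = no + nh - 1; m = n - 1;
          u = (\<lambda>i. fdot (tcG p m i) nh h);
          v = (\<lambda>i. fdot (tcBT p m i) m x);
          w = (\<lambda>i. fmul (u i) (v i))
      in if q < no then fdot (tcAT p q) m w
         else fadd (fdot (tcAT p no) m w) (fmul (h nh) (fdot (tcBTm p m (m + 1)) n x)))"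

definition magA :: "(nat \<Rightarrow> real) \<Rightarrow> nat \<Rightarrow> nat \<Rightarrow> (nat \<Rightarrow> real) \<Rightarrow> (nat \<Rightarrow> real) \<Rightarrow> nat \<Rightarrow> real" where
  "magA p nh no h x q =
     (let m = no + nh - 2 in
      \<Sum>j=1..m. \<bar>tcAT p q j\<bar> *
        ((\<Sum>k=1..nh. \<bar>tcG p m j k\<bar> * \<bar>h k\<bar>) * (\<Sum>k=1..m. \<bar>tcBT p m j k\<bar> * \<bar>x k\<bar>)))"

definition magB :: "(nat \<Rightarrow> real) \<Rightarrow> nat \<Rightarrow> nat \<Rightarrow> (nat \<Rightarrow> real) \<Rightarrow> (nat \<Rightarrow> real) \<Rightarrow> real" where
  "magB p nh no h x =
     (let n = no + nh - 1; m = n - 1 in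
      \<bar>h nh\<bar> * (\<Sum>k=1..n. \<bar>tcBTm p m n k\<bar> * \<bar>x k\<bar>))"

end

theory Submission
  imports Defs
begin

text \<open>Every intermediate quantity \<open>y\<close> of the computation is compared with its exact
  counterpart \<open>Y\<close> through a bound \<open>|y - Y| \<le> S (r \<epsilon> + C \<epsilon>\<^sup>2)\<close>, where \<open>S\<close> bounds the
  magnitude of \<open>Y\<close> (a sum of products of absolute values). Such bounds propagate through the
  three kinds of steps of the algorithm: a rounded product adds the first-order rates of its
  factors plus one, a rounded dot product adds its own rate, and the final rounded addition
  takes the larger rate plus one. The second-order constants \<open>C\<close> are composed along the way
  by explicit formulas in the given rates, so they do not depend on \<open>\<epsilon>\<close> or on the
  floating point system. The dot product step needs a nonnegative
  rounding rate \<open>\<alpha> \<epsilon> + K\<^sub>0 \<epsilon>\<^sup>2\<close>; since the first row of \<open>A\<^sup>T\<close> consists of ones, a negative rate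
  is compatible with the hypotheses only if every floating point number is zero, and then
  both sides vanish.\<close>

definition err_bound :: "real \<Rightarrow> real \<Rightarrow> real \<Rightarrow> real \<Rightarrow> real \<Rightarrow> real \<Rightarrow> bool" where
  "err_bound eps S r C y Y \<longleftrightarrow> \<bar>Y\<bar> \<le> S \<and> \<bar>y - Y\<bar> \<le> S * (r * eps + C * eps\<^sup>2)"

lemma err_bound_nonneg: "err_bound eps S r C y Y \<Longrightarrow> 0 \<le> S"
  unfolding err_bound_def by linarith

lemma rate_le_abs:
  fixes eps r C :: real
  assumes "0 \<le> eps" "eps \<le> 1"
  shows "r * eps + C * eps\<^sup>2 \<le> (\<bar>r\<bar> + \<bar>C\<bar>) * eps"
proof -
  have "r * eps \<le> \<bar>r\<bar> * eps" using assms by (simp add: mult_right_mono)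
  moreover have "C * eps\<^sup>2 \<le> \<bar>C\<bar> * eps\<^sup>2" by (simp add: mult_right_mono)
  moreover have "\<bar>C\<bar> * eps\<^sup>2 \<le> \<bar>C\<bar> * eps"
    using assms by (simp add: mult_left_mono power2_eq_square mult_left_le)
  ultimately show ?thesis by (simp add: algebra_simps)
qed

lemma err_bound_abs_le:
  assumes "err_bound eps S r C y Y" "0 \<le> eps" "eps \<le> 1"
  shows "\<bar>y\<bar> \<le> S * (1 + (\<bar>r\<bar> + \<bar>C\<bar>) * eps)"
proof -
  have "S * (r * eps + C * eps\<^sup>2) \<le> S * ((\<bar>r\<bar> + \<bar>C\<bar>) * eps)"
    using rate_le_abs[OF assms(2,3)] err_bound_nonneg[OF assms(1)] by (rule mult_left_mono)
  moreover have "\<bar>y\<bar> \<le> \<bar>Y\<bar> + \<bar>y - Y\<bar>" by arith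
  ultimately show ?thesis using assms(1) unfolding err_bound_def by (simp add: algebra_simps)
qed

lemma err_bound_le:
  assumes "err_bound eps S r C y Y" "S * C \<le> K"
  shows "\<bar>y - Y\<bar> \<le> S * r * eps + K * eps\<^sup>2"
proof -
  have "S * C * eps\<^sup>2 \<le> K * eps\<^sup>2" using assms(2) by (simp add: mult_right_mono)
  then show ?thesis using assms(1) unfolding err_bound_def by (simp add: algebra_simps)
qed

lemma mult_le_mult_abs_add:
  fixes a M C D :: real
  assumes "0 \<le> a" "a \<le> M"
  shows "a * C \<le> M * (\<bar>C\<bar> + \<bar>D\<bar>)"
proof -
  have "a * C \<le> a * (\<bar>C\<bar> + \<bar>D\<bar>)" using assms(1) by (intro mult_left_mono) auto
  also have "\<dots> \<le> M * (\<bar>C\<bar> + \<bar>D\<bar>)" using assms(2) by (intro mult_right_mono) auto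
  finally show ?thesis .
qed

lemma err_bound_round:
  assumes eps: "0 \<le> eps" "eps \<le> 1" and y: "err_bound eps S r C y Y" and d: "\<bar>d\<bar> \<le> eps"
  shows "err_bound eps S (r + 1) (C + \<bar>r\<bar> + \<bar>C\<bar>) (y * (1 + d)) Y"
proof -
  have "\<bar>y * (1 + d) - Y\<bar> \<le> \<bar>y - Y\<bar> + \<bar>y\<bar> * \<bar>d\<bar>"
    using abs_triangle_ineq[of "y - Y" "y * d"] by (simp add: algebra_simps abs_mult)
  also have "\<dots> \<le> S * (r * eps + C * eps\<^sup>2) + S * (1 + (\<bar>r\<bar> + \<bar>C\<bar>) * eps) * eps"
    using y err_bound_abs_le[OF y eps] d eps err_bound_nonneg[OF y] unfolding err_bound_def
    by (intro add_mono mult_mono) auto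
  also have "\<dots> = S * ((r + 1) * eps + (C + \<bar>r\<bar> + \<bar>C\<bar>) * eps\<^sup>2)"
    by (simp add: algebra_simps power2_eq_square)
  finally show ?thesis using y unfolding err_bound_def by blast
qed

lemma err_bound_mono:
  assumes "err_bound eps S r C y Y" "0 \<le> eps" "r \<le> r'" "C \<le> C'"
  shows "err_bound eps S r' C' y Y"
proof -
  have "S * (r * eps + C * eps\<^sup>2) \<le> S * (r' * eps + C' * eps\<^sup>2)"
    using assms err_bound_nonneg[OF assms(1)]
    by (intro mult_left_mono add_mono mult_right_mono) auto
  then show ?thesis using assms(1) unfolding err_bound_def by linarith
qed

lemma err_bound_add:
  assumes "err_bound eps S r C y Y" "err_bound eps T r C z Z"
  shows "err_bound eps (S + T) r C (y + z) (Y + Z)"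
  using assms abs_triangle_ineq[of Y Z] abs_triangle_ineq[of "y - Y" "z - Z"]
  unfolding err_bound_def by (simp add: algebra_simps)

lemma err_bound_mult:
  assumes eps: "0 \<le> eps" "eps \<le> 1"
    and u: "err_bound eps S a A u U" and v: "err_bound eps T b B v V"
  shows "err_bound eps (S * T) (a + b) (A + B + (\<bar>a\<bar> + \<bar>A\<bar>) * (\<bar>b\<bar> + \<bar>B\<bar>)) (u * v) (U * V)"
proof -
  have S: "0 \<le> S" and T: "0 \<le> T" using u v by (auto dest: err_bound_nonneg)
  have U: "\<bar>U\<bar> \<le> S" and eu: "\<bar>u - U\<bar> \<le> S * (a * eps + A * eps\<^sup>2)"
    and V: "\<bar>V\<bar> \<le> T" and ev: "\<bar>v - V\<bar> \<le> T * (b * eps + B * eps\<^sup>2)"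
    using u v by (simp_all add: err_bound_def)
  have eu': "\<bar>u - U\<bar> \<le> S * ((\<bar>a\<bar> + \<bar>A\<bar>) * eps)"
    using order_trans[OF eu mult_left_mono[OF rate_le_abs[OF eps] S]] .
  have ev': "\<bar>v - V\<bar> \<le> T * ((\<bar>b\<bar> + \<bar>B\<bar>) * eps)"
    using order_trans[OF ev mult_left_mono[OF rate_le_abs[OF eps] T]] .
  have "\<bar>u * v - U * V\<bar> = \<bar>(u - U) * V + U * (v - V) + (u - U) * (v - V)\<bar>"
    by (simp add: algebra_simps)
  also have "\<dots> \<le> \<bar>u - U\<bar> * \<bar>V\<bar> + \<bar>U\<bar> * \<bar>v - V\<bar> + \<bar>u - U\<bar> * \<bar>v - V\<bar>"
    unfolding abs_mult[symmetric] by (rule order_trans[OF abs_triangle_ineq add_right_mono[OF abs_triangle_ineq]])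
  also have "\<dots> \<le> S * (a * eps + A * eps\<^sup>2) * T + S * (T * (b * eps + B * eps\<^sup>2))
      + S * ((\<bar>a\<bar> + \<bar>A\<bar>) * eps) * (T * ((\<bar>b\<bar> + \<bar>B\<bar>) * eps))"
    using eu ev eu' ev' U V S T order_trans[OF abs_ge_zero eu] order_trans[OF abs_ge_zero eu']
    by (intro add_mono mult_mono) auto
  also have "\<dots> = S * T * ((a + b) * eps + (A + B + (\<bar>a\<bar> + \<bar>A\<bar>) * (\<bar>b\<bar> + \<bar>B\<bar>)) * eps\<^sup>2)"
    by (simp add: algebra_simps power2_eq_square)
  finally show ?thesis using U V S T unfolding err_bound_def by (simp add: abs_mult mult_mono)
qed

definition mult_err_const :: "real \<Rightarrow> real \<Rightarrow> real \<Rightarrow> real \<Rightarrow> real" where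
  "mult_err_const a A b B =
     (let C = A + B + (\<bar>a\<bar> + \<bar>A\<bar>) * (\<bar>b\<bar> + \<bar>B\<bar>) in C + \<bar>a + b\<bar> + \<bar>C\<bar>)"

lemma err_bound_mult_round:
  assumes eps: "0 \<le> eps" "eps \<le> 1"
    and u: "err_bound eps S a A u U" and v: "err_bound eps T b B v V" and d: "\<bar>d\<bar> \<le> eps"
  shows "err_bound eps (S * T) (a + b + 1) (mult_err_const a A b B) (u * v * (1 + d)) (U * V)"
  using err_bound_round[OF eps err_bound_mult[OF eps u v] d] by (simp add: mult_err_const_def Let_def)

definition dot_err_const :: "real \<Rightarrow> real \<Rightarrow> real \<Rightarrow> real \<Rightarrow> real" where
  "dot_err_const r C c K = C + K + (\<bar>r\<bar> + \<bar>C\<bar>) * (\<bar>c\<bar> + \<bar>K\<bar>)"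

lemma err_bound_dot_round:
  fixes a w W P :: "'i \<Rightarrow> real" and J :: "'i set"
  assumes eps: "0 \<le> eps" "eps \<le> 1"
    and w: "\<And>j. j \<in> J \<Longrightarrow> err_bound eps (P j) r C (w j) (W j)"
    and f: "\<bar>(\<Sum>j\<in>J. a j * w j) - f\<bar> \<le> (\<Sum>j\<in>J. \<bar>a j\<bar> * \<bar>w j\<bar>) * (c * eps + K * eps\<^sup>2)"
    and rate: "0 \<le> c * eps + K * eps\<^sup>2"
  shows "err_bound eps (\<Sum>j\<in>J. \<bar>a j\<bar> * P j) (r + c) (dot_err_const r C c K)
           f (\<Sum>j\<in>J. a j * W j)"
proof -
  define S where "S = (\<Sum>j\<in>J. \<bar>a j\<bar> * P j)"
  define L where "L = \<bar>r\<bar> + \<bar>C\<bar>"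
  have S: "0 \<le> S"
    unfolding S_def using err_bound_nonneg[OF w] by (auto intro!: sum_nonneg)
  have L: "0 \<le> L" by (simp add: L_def)
  have "\<bar>\<Sum>j\<in>J. a j * W j\<bar> \<le> (\<Sum>j\<in>J. \<bar>a j\<bar> * \<bar>W j\<bar>)"
    by (rule order_trans[OF sum_abs]) (simp add: abs_mult)
  also have "\<dots> \<le> S"
    unfolding S_def using w by (intro sum_mono mult_left_mono) (auto simp: err_bound_def)
  finally have W: "\<bar>\<Sum>j\<in>J. a j * W j\<bar> \<le> S" .
  have "\<bar>(\<Sum>j\<in>J. a j * w j) - (\<Sum>j\<in>J. a j * W j)\<bar> \<le> (\<Sum>j\<in>J. \<bar>a j\<bar> * \<bar>w j - W j\<bar>)"
    unfolding sum_subtractf[symmetric]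
    by (rule order_trans[OF sum_abs]) (simp add: abs_mult flip: right_diff_distrib)
  also have "\<dots> \<le> (\<Sum>j\<in>J. \<bar>a j\<bar> * (P j * (r * eps + C * eps\<^sup>2)))"
    using w by (intro sum_mono mult_left_mono) (auto simp: err_bound_def)
  also have "\<dots> = S * (r * eps + C * eps\<^sup>2)"
    by (simp add: S_def sum_distrib_right mult.assoc)
  finally have propagated:
    "\<bar>(\<Sum>j\<in>J. a j * w j) - (\<Sum>j\<in>J. a j * W j)\<bar> \<le> S * (r * eps + C * eps\<^sup>2)" .
  have "(\<Sum>j\<in>J. \<bar>a j\<bar> * \<bar>w j\<bar>) \<le> (\<Sum>j\<in>J. \<bar>a j\<bar> * (P j * (1 + L * eps)))"
    using err_bound_abs_le[OF w eps] by (intro sum_mono mult_left_mono) (auto simp: L_def)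
  also have "\<dots> = S * (1 + L * eps)"
    by (simp add: S_def sum_distrib_right mult.assoc)
  finally have "\<bar>(\<Sum>j\<in>J. a j * w j) - f\<bar> \<le> S * (1 + L * eps) * (c * eps + K * eps\<^sup>2)"
    using f rate by (meson mult_right_mono order_trans)
  also have "\<dots> = S * (c * eps + K * eps\<^sup>2) + S * L * eps * (c * eps + K * eps\<^sup>2)"
    by (simp add: algebra_simps)
  also have "\<dots> \<le> S * (c * eps + K * eps\<^sup>2) + S * L * eps * ((\<bar>c\<bar> + \<bar>K\<bar>) * eps)"
    using S L eps by (intro add_left_mono mult_left_mono rate_le_abs) simp_all
  finally have rounded: "\<bar>(\<Sum>j\<in>J. a j * w j) - f\<bar>
      \<le> S * (c * eps + (K + L * (\<bar>c\<bar> + \<bar>K\<bar>)) * eps\<^sup>2)"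
    by (simp add: algebra_simps power2_eq_square)
  have "\<bar>f - (\<Sum>j\<in>J. a j * W j)\<bar> \<le> S * (r * eps + C * eps\<^sup>2)
      + S * (c * eps + (K + L * (\<bar>c\<bar> + \<bar>K\<bar>)) * eps\<^sup>2)"
    using propagated rounded by linarith
  also have "\<dots> = S * ((r + c) * eps + dot_err_const r C c K * eps\<^sup>2)"
    by (simp add: dot_err_const_def L_def algebra_simps)
  finally show ?thesis using W unfolding err_bound_def S_def by blast
qed

definition add_err_const :: "real \<Rightarrow> real \<Rightarrow> real \<Rightarrow> real \<Rightarrow> real" where
  "add_err_const r C s D = max (C + \<bar>r\<bar> + \<bar>C\<bar>) (D + \<bar>s\<bar> + \<bar>D\<bar>)"

lemma err_bound_add_round:
  assumes eps: "0 \<le> eps" "eps \<le> 1"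
    and y: "err_bound eps S r C y Y" and z: "err_bound eps T s D z Z" and d: "\<bar>d\<bar> \<le> eps"
  shows "err_bound eps (S + T) (max r s + 1) (add_err_const r C s D) ((y + z) * (1 + d)) (Y + Z)"
proof -
  have "err_bound eps S (max r s + 1) (add_err_const r C s D) (y * (1 + d)) Y"
    by (rule err_bound_mono[OF err_bound_round[OF eps y d] eps(1)]) (auto simp: add_err_const_def)
  moreover have "err_bound eps T (max r s + 1) (add_err_const r C s D) (z * (1 + d)) Z"
    by (rule err_bound_mono[OF err_bound_round[OF eps z d] eps(1)]) (auto simp: add_err_const_def)
  ultimately show ?thesis using err_bound_add by (fastforce simp: distrib_right)
qed

lemma fp_model_mult:
  assumes "fp_model F eps fmul fadd" "y \<in> F" "z \<in> F"
  obtains d where "fmul y z \<in> F" "\<bar>d\<bar> \<le> eps" "fmul y z = y * z * (1 + d)"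
  using assms unfolding fp_model_def by blast

lemma fp_model_add:
  assumes "fp_model F eps fmul fadd" "y \<in> F" "z \<in> F"
  obtains d where "fadd y z \<in> F" "\<bar>d\<bar> \<le> eps" "fadd y z = (y + z) * (1 + d)"
  using assms unfolding fp_model_def by blast

lemma dot_err_in_F:
  "dot_err F eps fdot a len c K \<Longrightarrow> \<forall>j\<in>{1..len}. y j \<in> F \<Longrightarrow> fdot a len y \<in> F"
  unfolding dot_err_def by blast

lemma dot_err_bound:
  "dot_err F eps fdot a len c K \<Longrightarrow> \<forall>j\<in>{1..len}. y j \<in> F \<Longrightarrow>
    \<bar>(\<Sum>j=1..len. a j * y j) - fdot a len y\<bar>
      \<le> (\<Sum>j=1..len. \<bar>a j\<bar> * \<bar>y j\<bar>) * (c * eps + K * eps\<^sup>2)"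
  unfolding dot_err_def by blast

lemma dot_err_err_bound:
  assumes "dot_err F eps fdot a len c K" "\<forall>j\<in>{1..len}. y j \<in> F"
  shows "err_bound eps (\<Sum>j=1..len. \<bar>a j\<bar> * \<bar>y j\<bar>) c K (fdot a len y) (\<Sum>j=1..len. a j * y j)"
proof -
  have "\<bar>\<Sum>j=1..len. a j * y j\<bar> \<le> (\<Sum>j=1..len. \<bar>a j\<bar> * \<bar>y j\<bar>)"
    by (rule order_trans[OF sum_abs]) (simp add: abs_mult)
  then show ?thesis using assms unfolding dot_err_def err_bound_def by (auto simp: abs_minus_commute)
qed

lemma dot_err_rate_nonneg:
  assumes "dot_err F eps fdot a len c K" "z \<in> F" "z \<noteq> 0" "j \<in> {1..len}" "a j \<noteq> 0"
  shows "0 \<le> c * eps + K * eps\<^sup>2"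
proof -
  have "0 < \<bar>a j\<bar> * \<bar>z\<bar>" using assms(3,5) by simp
  also have "\<dots> \<le> (\<Sum>i=1..len. \<bar>a i\<bar> * \<bar>z\<bar>)"
    using assms(4) by (intro member_le_sum) auto
  finally have "0 < (\<Sum>i=1..len. \<bar>a i\<bar> * \<bar>z\<bar>)" .
  moreover have "0 \<le> (\<Sum>i=1..len. \<bar>a i\<bar> * \<bar>z\<bar>) * (c * eps + K * eps\<^sup>2)"
    using assms(1,2) unfolding dot_err_def
    by (elim allE[of _ "\<lambda>_. z"]) (auto intro: order_trans[OF abs_ge_zero])
  ultimately show ?thesis by (simp add: zero_le_mult_iff)
qed

lemma exact_s_eq:
  assumes "1 \<le> nh" "2 \<le> no" "m = no + nh - 2"
  shows "exact_s p nh no h x q =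
      (\<Sum>j=1..m. tcAT p q j * ((\<Sum>k=1..nh. tcG p m j k * h k) * (\<Sum>k=1..m. tcBT p m j k * x k)))
      + (if q = no then h nh * (\<Sum>k=1..m + 1. tcBTm p m (m + 1) k * x k) else 0)"
proof -
  have n: "no + nh - 1 = Suc m" "no + nh - 1 - 1 = m" using assms by auto
  have column: "tcATm p m no q j * ((\<Sum>k=1..nh. tcGm p m nh j k * h k) * (\<Sum>k=1..Suc m. tcBTm p m j k * x k))
      = tcAT p q j * ((\<Sum>k=1..nh. tcG p m j k * h k) * (\<Sum>k=1..m. tcBT p m j k * x k))"
    if j: "j \<in> {1..m}" for j
  proof -
    have "(\<Sum>k=1..Suc m. tcBTm p m j k * x k) = (\<Sum>k=1..m. tcBT p m j k * x k)"
      using j by (auto simp: tcBTm_def intro: sum.cong)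
    then show ?thesis using j by (simp add: tcATm_def tcGm_def)
  qed
  have "(\<Sum>k=1..nh. tcGm p m nh (Suc m) k * h k) = (\<Sum>k=1..nh. if k = nh then h k else 0)"
    by (intro sum.cong) (auto simp: tcGm_def)
  then have last_row_G: "(\<Sum>k=1..nh. tcGm p m nh (Suc m) k * h k) = h nh"
    using assms(1) by simp
  have "exact_s p nh no h x q
      = (\<Sum>j=1..m. tcATm p m no q j * ((\<Sum>k=1..nh. tcGm p m nh j k * h k)
                                        * (\<Sum>k=1..Suc m. tcBTm p m j k * x k)))
        + tcATm p m no q (Suc m) * (h nh * (\<Sum>k=1..Suc m. tcBTm p m (Suc m) k * x k))"
    unfolding exact_s_def Let_def n last_row_G[symmetric] by simp
  also have "(\<Sum>j=1..m. tcATm p m no q j * ((\<Sum>k=1..nh. tcGm p m nh j k * h k)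
                                        * (\<Sum>k=1..Suc m. tcBTm p m j k * x k)))
      = (\<Sum>j=1..m. tcAT p q j * ((\<Sum>k=1..nh. tcG p m j k * h k) * (\<Sum>k=1..m. tcBT p m j k * x k)))"
    by (rule sum.cong[OF refl column])
  finally show ?thesis by (simp add: tcATm_def)
qed

lemma shat_eq:
  assumes "1 \<le> nh" "2 \<le> no" "m = no + nh - 2"
  shows "shat fmul fadd fdot p nh no h x q =
    (let w = (\<lambda>i. fmul (fdot (tcG p m i) nh h) (fdot (tcBT p m i) m x)) in
     if q < no then fdot (tcAT p q) m w
     else fadd (fdot (tcAT p no) m w) (fmul (h nh) (fdot (tcBTm p m (m + 1)) (m + 1) x)))"
proof -
  have "no + nh - 1 = m + 1" "no + nh - 1 - 1 = m" using assms by auto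
  then show ?thesis unfolding shat_def Let_def by simp
qed

lemma magB_eq:
  assumes "1 \<le> nh" "2 \<le> no" "m = no + nh - 2"
  shows "magB p nh no h x = \<bar>h nh\<bar> * (\<Sum>k=1..m + 1. \<bar>tcBTm p m (m + 1) k\<bar> * \<bar>x k\<bar>)"
proof -
  have "no + nh - 1 = m + 1" "no + nh - 1 - 1 = m" using assms by auto
  then show ?thesis unfolding magB_def Let_def by simp
qed

lemma magA_nonneg: "0 \<le> magA p nh no h x q"
  by (auto simp: magA_def Let_def intro!: sum_nonneg mult_nonneg_nonneg)

lemma magB_nonneg: "0 \<le> magB p nh no h x"
  by (auto simp: magB_def Let_def intro!: sum_nonneg mult_nonneg_nonneg)

lemma magA_le_sum: "q \<in> {1..no} \<Longrightarrow> magA p nh no h x q \<le> (\<Sum>q=1..no. magA p nh no h x q)"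
  by (rule member_le_sum) (simp_all add: magA_nonneg)

context
  fixes F :: "real set" and eps :: real and fmul fadd :: "real \<Rightarrow> real \<Rightarrow> real"
    and fdot :: "(nat \<Rightarrow> real) \<Rightarrow> nat \<Rightarrow> (nat \<Rightarrow> real) \<Rightarrow> real"
    and p h x :: "nat \<Rightarrow> real" and nh no m :: nat and gam bet alp betn K0 :: real
  assumes fp: "fp_model F eps fmul fadd" and eps_le_1: "eps \<le> 1"
    and nh: "1 \<le> nh" and no: "2 \<le> no" and m: "m = no + nh - 2"
    and h_F: "\<forall>j\<in>{1..nh}. h j \<in> F" and x_F: "\<forall>j\<in>{1..m + 1}. x j \<in> F"
    and dot_G: "\<forall>i\<in>{1..m}. dot_err F eps fdot (tcG p m i) nh gam K0"
    and dot_B: "\<forall>i\<in>{1..m}. dot_err F eps fdot (tcBT p m i) m bet K0"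
    and dot_A: "\<forall>i\<in>{1..no}. dot_err F eps fdot (tcAT p i) m alp K0"
    and dot_Bn: "dot_err F eps fdot (tcBTm p m (m + 1)) (m + 1) betn K0"
begin

abbreviation Gh :: "nat \<Rightarrow> real" where
  "Gh i \<equiv> \<Sum>k=1..nh. tcG p m i k * h k"

abbreviation Bx :: "nat \<Rightarrow> real" where
  "Bx i \<equiv> \<Sum>k=1..m. tcBT p m i k * x k"

abbreviation w_hat :: "nat \<Rightarrow> real" where
  "w_hat i \<equiv> fmul (fdot (tcG p m i) nh h) (fdot (tcBT p m i) m x)"

abbreviation hBn_hat :: real where
  "hBn_hat \<equiv> fmul (h nh) (fdot (tcBTm p m (m + 1)) (m + 1) x)"

lemma eps_bounds: "0 \<le> eps" "eps \<le> 1"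
  using fp eps_le_1 unfolding fp_model_def by auto

lemma x_F_lower: "\<forall>j\<in>{1..m}. x j \<in> F"
  using x_F by auto

lemma Gh_hat_in_F: "i \<in> {1..m} \<Longrightarrow> fdot (tcG p m i) nh h \<in> F"
  using dot_G h_F by (blast intro: dot_err_in_F)

lemma Bx_hat_in_F: "i \<in> {1..m} \<Longrightarrow> fdot (tcBT p m i) m x \<in> F"
  using dot_B x_F_lower by (blast intro: dot_err_in_F)

lemma w_hat_in_F: "i \<in> {1..m} \<Longrightarrow> w_hat i \<in> F"
  by (metis fp_model_mult[OF fp Gh_hat_in_F Bx_hat_in_F])

lemma w_hat_err_bound:
  assumes "i \<in> {1..m}"
  shows "err_bound eps ((\<Sum>k=1..nh. \<bar>tcG p m i k\<bar> * \<bar>h k\<bar>) * (\<Sum>k=1..m. \<bar>tcBT p m i k\<bar> * \<bar>x k\<bar>))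
           (gam + bet + 1) (mult_err_const gam K0 bet K0) (w_hat i) (Gh i * Bx i)"
proof -
  obtain d where d: "\<bar>d\<bar> \<le> eps"
    and w: "w_hat i = fdot (tcG p m i) nh h * fdot (tcBT p m i) m x * (1 + d)"
    using fp_model_mult[OF fp Gh_hat_in_F[OF assms] Bx_hat_in_F[OF assms]] by metis
  show ?thesis
    unfolding w
    by (rule err_bound_mult_round[OF eps_bounds
          dot_err_err_bound[OF dot_G[rule_format, OF assms] h_F]
          dot_err_err_bound[OF dot_B[rule_format, OF assms] x_F_lower] d])
qed

abbreviation C_row :: real where
  "C_row \<equiv> dot_err_const (gam + bet + 1) (mult_err_const gam K0 bet K0) alp K0"

abbreviation C_last :: real where
  "C_last \<equiv> add_err_const (gam + bet + alp + 1) C_row (betn + 1) (mult_err_const 0 0 betn K0)"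

lemma A_row_in_F: "q \<in> {1..no} \<Longrightarrow> fdot (tcAT p q) m w_hat \<in> F"
  using dot_A w_hat_in_F by (blast intro: dot_err_in_F)

lemma A_row_err_bound:
  assumes q: "q \<in> {1..no}" and rate: "0 \<le> alp * eps + K0 * eps\<^sup>2"
  shows "err_bound eps (magA p nh no h x q) (gam + bet + alp + 1) C_row
           (fdot (tcAT p q) m w_hat) (\<Sum>j=1..m. tcAT p q j * (Gh j * Bx j))"
proof -
  have "\<forall>j\<in>{1..m}. w_hat j \<in> F" using w_hat_in_F by blast
  from err_bound_dot_round[OF eps_bounds w_hat_err_bound
      dot_err_bound[OF dot_A[rule_format, OF q] this] rate]
  have "err_bound eps (magA p nh no h x q) (gam + bet + 1 + alp) C_row
          (fdot (tcAT p q) m w_hat) (\<Sum>j=1..m. tcAT p q j * (Gh j * Bx j))"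
    by (simp add: magA_def Let_def m)
  then show ?thesis by (simp add: add.commute add.left_commute)
qed

lemma hBn_hat_in_F: "hBn_hat \<in> F"
proof -
  have "h nh \<in> F" using h_F nh by auto
  with fp_model_mult[OF fp this dot_err_in_F[OF dot_Bn x_F]] show ?thesis by blast
qed

lemma hBn_hat_err_bound:
  "err_bound eps (magB p nh no h x) (betn + 1) (mult_err_const 0 0 betn K0)
     hBn_hat (h nh * (\<Sum>k=1..m + 1. tcBTm p m (m + 1) k * x k))"
proof -
  have h_nh: "h nh \<in> F" using h_F nh by auto
  obtain d where d: "\<bar>d\<bar> \<le> eps"
    and e: "hBn_hat = h nh * fdot (tcBTm p m (m + 1)) (m + 1) x * (1 + d)"
    using fp_model_mult[OF fp h_nh dot_err_in_F[OF dot_Bn x_F]] by metis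
  have "err_bound eps \<bar>h nh\<bar> 0 0 (h nh) (h nh)" by (simp add: err_bound_def)
  from err_bound_mult_round[OF eps_bounds this dot_err_err_bound[OF dot_Bn x_F] d]
  show ?thesis unfolding e by (simp add: magB_eq[OF nh no m])
qed

lemma shat_row: "q < no \<Longrightarrow> shat fmul fadd fdot p nh no h x q = fdot (tcAT p q) m w_hat"
  by (simp add: shat_eq[OF nh no m])

lemma shat_last: "shat fmul fadd fdot p nh no h x no = fadd (fdot (tcAT p no) m w_hat) hBn_hat"
  by (simp add: shat_eq[OF nh no m])

lemma alp_rate_nonneg:
  assumes "z \<in> F" "z \<noteq> 0"
  shows "0 \<le> alp * eps + K0 * eps\<^sup>2"
proof -
  have "1 \<in> {1..no}" "1 \<in> {1..m}" using no m nh by auto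
  moreover have "tcAT p 1 1 \<noteq> 0" by (simp add: tcAT_def)
  ultimately show ?thesis using dot_err_rate_nonneg[OF dot_A[rule_format] assms] by blast
qed

lemma zero_F_vanishing:
  assumes F0: "\<forall>z\<in>F. z = 0" and q: "q \<in> {1..no}"
  shows "shat fmul fadd fdot p nh no h x q = 0" "exact_s p nh no h x q = 0"
    "magA p nh no h x q = 0" "magB p nh no h x = 0"
proof -
  have h0: "h j = 0" if "j \<in> {1..nh}" for j using F0 h_F that by blast
  then have "h nh = 0" using nh by simp
  then show "exact_s p nh no h x q = 0" "magA p nh no h x q = 0" "magB p nh no h x = 0"
    using h0 by (simp_all add: exact_s_eq[OF nh no m] magA_def magB_eq[OF nh no m])
  have "shat fmul fadd fdot p nh no h x q \<in> F"
  proof (cases "q < no")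
    case True
    then show ?thesis using q A_row_in_F by (simp add: shat_row)
  next
    case False
    have "no \<in> {1..no}" using no by simp
    then obtain d where "fadd (fdot (tcAT p no) m w_hat) hBn_hat \<in> F"
      using fp_model_add[OF fp A_row_in_F hBn_hat_in_F] by blast
    with False q show ?thesis by (simp add: shat_last)
  qed
  then show "shat fmul fadd fdot p nh no h x q = 0" using F0 by blast
qed

lemma shat_err_bound_row:
  assumes q: "q \<in> {1..no - 1}"
  shows "err_bound eps (magA p nh no h x q) (gam + bet + alp + 1) C_row
           (shat fmul fadd fdot p nh no h x q) (exact_s p nh no h x q)"
proof (cases "\<exists>z\<in>F. z \<noteq> 0")
  case True
  then have "0 \<le> alp * eps + K0 * eps\<^sup>2" using alp_rate_nonneg by blast
  moreover have "q \<in> {1..no}" "q < no" using q by auto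
  ultimately show ?thesis using A_row_err_bound by (simp add: shat_row exact_s_eq[OF nh no m])
next
  case False
  moreover have "q \<in> {1..no}" using q by auto
  ultimately show ?thesis using zero_F_vanishing by (simp add: err_bound_def)
qed

lemma shat_err_bound_last:
  "err_bound eps (magA p nh no h x no + magB p nh no h x) (max (gam + bet + alp + 1) (betn + 1) + 1)
     C_last (shat fmul fadd fdot p nh no h x no) (exact_s p nh no h x no)"
proof -
  have no_in: "no \<in> {1..no}" using no by simp
  show ?thesis
  proof (cases "\<exists>z\<in>F. z \<noteq> 0")
    case True
    then have rate: "0 \<le> alp * eps + K0 * eps\<^sup>2" using alp_rate_nonneg by blast
    obtain d where d: "\<bar>d\<bar> \<le> eps"
      and s: "shat fmul fadd fdot p nh no h x no = (fdot (tcAT p no) m w_hat + hBn_hat) * (1 + d)"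
      using fp_model_add[OF fp A_row_in_F[OF no_in] hBn_hat_in_F] unfolding shat_last by blast
    show ?thesis
      unfolding s exact_s_eq[OF nh no m]
      using err_bound_add_round[OF eps_bounds A_row_err_bound[OF no_in rate] hBn_hat_err_bound d]
      by simp
  next
    case False
    then show ?thesis using zero_F_vanishing[OF _ no_in] by (simp add: err_bound_def)
  qed
qed

lemma shat_error_bounds:
  assumes "\<And>q. q \<in> {1..no} \<Longrightarrow> magA p nh no h x q * C_row \<le> K"
    and "(magA p nh no h x no + magB p nh no h x) * C_last \<le> K"
  shows "(\<forall>q\<in>{1..no - 1}.
            \<bar>shat fmul fadd fdot p nh no h x q - exact_s p nh no h x q\<bar>
              \<le> magA p nh no h x q * (gam + bet + alp + 1) * eps + K * eps\<^sup>2) \<and>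
         \<bar>shat fmul fadd fdot p nh no h x no - exact_s p nh no h x no\<bar>
           \<le> (magA p nh no h x no + magB p nh no h x)
              * (max (gam + bet + alp + 1) (betn + 1) + 1) * eps + K * eps\<^sup>2"
  using err_bound_le[OF shat_err_bound_row assms(1)] err_bound_le[OF shat_err_bound_last assms(2)]
  by (auto simp: mult.assoc)

end

theorem mainTheorem5:
  fixes p :: "nat \<Rightarrow> real" and nh no :: nat
    and h x :: "nat \<Rightarrow> real"
    and gam bet alp betn K0 :: real
  assumes "1 \<le> nh" and "2 \<le> no"
    and "inj_on p {1..no + nh - 2}"
  shows "\<exists>K eps0. 0 < eps0 \<and>
    (\<forall>F eps fmul fadd fdot.
       fp_model F eps fmul fadd \<and> eps \<le> eps0 \<and>
       (\<forall>j\<in>{1..nh}. h j \<in> F) \<and> (\<forall>j\<in>{1..no + nh - 1}. x j \<in> F) \<and>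
       (\<forall>i\<in>{1..no + nh - 2}. dot_err F eps fdot (tcG p (no + nh - 2) i) nh gam K0) \<and>
       (\<forall>i\<in>{1..no + nh - 2}. dot_err F eps fdot (tcBT p (no + nh - 2) i) (no + nh - 2) bet K0) \<and>
       (\<forall>i\<in>{1..no}. dot_err F eps fdot (tcAT p i) (no + nh - 2) alp K0) \<and>
       dot_err F eps fdot (tcBTm p (no + nh - 2) (no + nh - 1)) (no + nh - 1) betn K0
     \<longrightarrow>
       (\<forall>q\<in>{1..no - 1}.
          \<bar>shat fmul fadd fdot p nh no h x q - exact_s p nh no h x q\<bar>
            \<le> magA p nh no h x q * (gam + bet + alp + 1) * eps + K * eps\<^sup>2) \<and>
       \<bar>shat fmul fadd fdot p nh no h x no - exact_s p nh no h x no\<bar>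
            \<le> (magA p nh no h x no + magB p nh no h x)
               * (max (gam + bet + alp + 1) (betn + 1) + 1) * eps + K * eps\<^sup>2)"
proof -
  define m where "m = no + nh - 2"
  have n: "no + nh - 1 = m + 1" using assms(1,2) by (simp add: m_def)
  define C_row where "C_row = dot_err_const (gam + bet + 1) (mult_err_const gam K0 bet K0) alp K0"
  define C_last where
    "C_last = add_err_const (gam + bet + alp + 1) C_row (betn + 1) (mult_err_const 0 0 betn K0)"
  define M where "M = (\<Sum>q=1..no. magA p nh no h x q) + magB p nh no h x"
  define K where "K = M * (\<bar>C_row\<bar> + \<bar>C_last\<bar>)"
  have "magA p nh no h x q * C_row \<le> K" if "q \<in> {1..no}" for q
    unfolding K_def M_def using magA_le_sum[OF that] magB_nonneg
    by (intro mult_le_mult_abs_add magA_nonneg add_increasing2)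
  moreover have "(magA p nh no h x no + magB p nh no h x) * C_last \<le> K"
    unfolding K_def M_def add.commute[of "\<bar>C_row\<bar>"] using magA_le_sum[of no] assms(2)
    by (intro mult_le_mult_abs_add add_nonneg_nonneg magA_nonneg magB_nonneg) simp_all
  ultimately show ?thesis
    unfolding n m_def[symmetric] C_row_def C_last_def
    by (intro exI[of _ K] exI[of _ 1] conjI[OF zero_less_one] allI impI, elim conjE)
      (rule shat_error_bounds[OF _ _ assms(1,2) m_def], assumption+)
qed

end
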